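(* Let $\mathbb{K}\in\{\mathbb{R},\mathbb{C}\}$, let $X$ be a linear space over $\mathbb{K}$, let $\phi\colon X\times X\to\mathbb{K}$ be biadditive and let $f\colon X\to\mathbb{K}$ satisfy $$f(x+y)=f(x)f(y)-\phi(x,y)\quad\text{for all }x,y\in X.$$ Assume there exists $z_0\in X$ with $\phi(z_0,z_0)\neq 0$. Then there exists a constant $a\in\mathbb{K}\setminus\{0\}$ such that $$f(x)=a\,\phi(x,z_0)+1\quad\text{for all }x\in X,$$ and moreover $$a^2\phi(x,z_0)^2=\phi(x,x)\quad\text{for all }x\in X.$$
   Context: A map $\phi\colon X\times X\to\mathbb{K}$ is biadditive if $\phi(x+x',y)=\phi(x,y)+\phi(x',y)$ and $\phi(x,y+y')=\phi(x,y)+\phi(x,y')$ for all $x,x',y,y'\in X$ (no homogeneity is assumed). $f$ is an arbitrary function (no regularity assumed). *)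

theory Defs
  imports "HOL-Analysis.Analysis"
begin

class scaleC =
  fixes scaleC :: "complex \<Rightarrow> 'a \<Rightarrow> 'a" (infixr \<open>*\<^sub>C\<close> 75)

class complex_vector = scaleC + ab_group_add +
  assumes scaleC_add_right: "a *\<^sub>C (x + y) = a *\<^sub>C x + a *\<^sub>C y"
    and scaleC_add_left: "(a + b) *\<^sub>C x = a *\<^sub>C x + b *\<^sub>C x"
    and scaleC_scaleC: "a *\<^sub>C (b *\<^sub>C x) = (a * b) *\<^sub>C x"
    and scaleC_one: "1 *\<^sub>C x = x"

definition biadditive :: "('x::ab_group_add \<Rightarrow> 'x \<Rightarrow> 'k::ab_group_add) \<Rightarrow> bool" where
  "biadditive \<phi> \<longleftrightarrow>
     (\<forall>x x' y. \<phi> (x + x') y = \<phi> x y + \<phi> x' y) \<and>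
     (\<forall>x y y'. \<phi> x (y + y') = \<phi> x y + \<phi> x y')"

end

theory Submission
  imports Defs
begin

text \<open>Expanding \<open>f (x + y + z)\<close> in the two ways allowed by associativity and cancelling the
  common terms gives \<open>\<phi> x y (f z - 1) = \<phi> y z (f x - 1)\<close>. Taking \<open>y = z = z\<^sub>0\<close> shows that
  \<open>f - 1\<close> is a constant multiple \<open>a\<close> of \<open>\<phi> (-) z\<^sub>0\<close>; substituting this into the equation for
  \<open>f (x + x)\<close> yields \<open>a\<^sup>2 \<phi>(x, z\<^sub>0)\<^sup>2 = \<phi>(x, x)\<close>, and \<open>a = 0\<close> would make \<open>f \<equiv> 1\<close>, contradicting
  \<open>\<phi>(z\<^sub>0, z\<^sub>0) \<noteq> 0\<close>.\<close>

lemma biadditive_add_left: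
  "biadditive \<phi> \<Longrightarrow> \<phi> (x + x') y = \<phi> x y + \<phi> x' y"
  by (simp add: biadditive_def)

lemma biadditive_add_right:
  "biadditive \<phi> \<Longrightarrow> \<phi> x (y + y') = \<phi> x y + \<phi> x y'"
  by (simp add: biadditive_def)

context
  fixes \<phi> :: "'x::ab_group_add \<Rightarrow> 'x \<Rightarrow> 'k::field" and f :: "'x \<Rightarrow> 'k"
  assumes biadd: "biadditive \<phi>"
    and feq: "\<And>x y. f (x + y) = f x * f y - \<phi> x y"
begin

lemma associativity_identity: "\<phi> x y * (f z - 1) = \<phi> y z * (f x - 1)"
proof -
  have "f ((x + y) + z) = f (x + (y + z))" by (simp add: add.assoc)
  then have "(f x * f y - \<phi> x y) * f z - (\<phi> x z + \<phi> y z)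
           = f x * (f y * f z - \<phi> y z) - (\<phi> x y + \<phi> x z)"
    by (simp only: feq biadditive_add_left[OF biadd] biadditive_add_right[OF biadd])
  then show ?thesis by (simp add: algebra_simps)
qed

lemma eq_scaled_plus_one:
  assumes "\<phi> z0 z0 \<noteq> 0"
  shows "f x = (f z0 - 1) / \<phi> z0 z0 * \<phi> x z0 + 1"
  using associativity_identity[of x z0 z0] assms by (simp add: field_simps)

theorem solution_characterization:
  assumes nz: "\<phi> z0 z0 \<noteq> 0"
  shows "\<exists>a. a \<noteq> 0 \<and> (\<forall>x. f x = a * \<phi> x z0 + 1) \<and> (\<forall>x. a^2 * (\<phi> x z0)^2 = \<phi> x x)"
proof (intro exI conjI allI)
  define a where "a = (f z0 - 1) / \<phi> z0 z0"
  have f_eq: "f x = a * \<phi> x z0 + 1" for x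
    unfolding a_def using eq_scaled_plus_one[OF nz] .
  then show "f x = a * \<phi> x z0 + 1" for x .
  show "a \<noteq> 0"
  proof
    assume "a = 0"
    then have "\<phi> z0 z0 = 0" using feq[of z0 z0] f_eq by simp
    with nz show False ..
  qed
  show "a^2 * (\<phi> x z0)^2 = \<phi> x x" for x
  proof -
    have "a * (\<phi> x z0 + \<phi> x z0) + 1 = (a * \<phi> x z0 + 1) * (a * \<phi> x z0 + 1) - \<phi> x x"
      using feq[of x x] by (simp only: f_eq biadditive_add_left[OF biadd])
    then show ?thesis by (simp add: algebra_simps power2_eq_square)
  qed
qed

end

theorem theorem1:
  shows
  "(\<forall>(\<phi>::'a::real_vector \<Rightarrow> 'a \<Rightarrow> real) (f::'a \<Rightarrow> real) z0.
      biadditive \<phi> \<longrightarrow> (\<forall>x y. f (x + y) = f x * f y - \<phi> x y) \<longrightarrow> \<phi> z0 z0 \<noteq> 0 \<longrightarrow>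
      (\<exists>a. a \<noteq> 0 \<and> (\<forall>x. f x = a * \<phi> x z0 + 1) \<and> (\<forall>x. a^2 * (\<phi> x z0)^2 = \<phi> x x)))
   \<and>
   (\<forall>(\<phi>::'b::complex_vector \<Rightarrow> 'b \<Rightarrow> complex) (f::'b \<Rightarrow> complex) z0.
      biadditive \<phi> \<longrightarrow> (\<forall>x y. f (x + y) = f x * f y - \<phi> x y) \<longrightarrow> \<phi> z0 z0 \<noteq> 0 \<longrightarrow>
      (\<exists>a. a \<noteq> 0 \<and> (\<forall>x. f x = a * \<phi> x z0 + 1) \<and> (\<forall>x. a^2 * (\<phi> x z0)^2 = \<phi> x x)))"
  by (intro conjI allI impI; rule solution_characterization) auto

end
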